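(* Let $F$ be an infinite perfect field of characteristic $p>2$, let $n\ge 1$ with $p^n\ne 3$. Then $W(1:\mathbf{n})_0$ is the unique proper non-zero semi-modular subalgebra of the Zassenhaus algebra $W(1:\mathbf{n})$.
   Context: The Zassenhaus algebra $W(1:\mathbf n)$ over $F$ has basis $e_i=x^{(i)}\partial$, $0\le i\le p^n-1$, with $[e_i,e_j]=\left(\binom{i+j-1}{i}-\binom{i+j-1}{j}\right)e_{i+j-1}$ (where $e_k=0$ if $k\ge p^n$ or $k<0$); $W(1:\mathbf n)_0$ is the subalgebra spanned by $e_i$, $i\ge 1$. For subalgebras $U,B$, $\langle U,B\rangle$ is the generated subalgebra. A subalgebra $B$ covers a subalgebra $A$ if $A$ is a maximal subalgebra of $B$. $U$ is upper modular (um) in $L$ if whenever $B$ is a subalgebra of $L$ which covers $U\cap B$, then $\langle U,B\rangle$ covers $U$; $U$ is lower modular (lm) in $L$ if whenever $B$ is a subalgebra of $L$ such that $\langle U,B\rangle$ covers $U$, then $B$ covers $U\cap B$; $U$ is semi-modular (sm) in $L$ if it is both um and lm. *)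

theory Defs
  imports Main
begin

definition perfect_field :: "'a::field itself \<Rightarrow> bool" where
  "perfect_field _ \<longleftrightarrow> (CHAR('a) = 0 \<or> (\<forall>x::'a. \<exists>y. y ^ CHAR('a) = x))"

text \<open>The Zassenhaus algebra W(1:n) of dimension N = p^n: elements are coefficient
  functions v with v i = 0 for i >= N; v stands for sum_i v i e_i.\<close>
definition zass :: "nat \<Rightarrow> (nat \<Rightarrow> 'a::field) set" where
  "zass N = {v. \<forall>i\<ge>N. v i = 0}"

text \<open>Structure constant: [e_i,e_j] = zc i j e_(i+j-1) (for i+j >= 1).\<close>
definition zc :: "nat \<Rightarrow> nat \<Rightarrow> 'a::field" where
  "zc i j = of_nat ((i + j - 1) choose i) - of_nat ((i + j - 1) choose j)"

definition zbr :: "nat \<Rightarrow> (nat \<Rightarrow> 'a::field) \<Rightarrow> (nat \<Rightarrow> 'a) \<Rightarrow> (nat \<Rightarrow> 'a)" where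
  "zbr N u v = (\<lambda>k. if k < N then
      (\<Sum>i<N. \<Sum>j<N. if i + j = k + 1 then u i * v j * zc i j else 0) else 0)"

definition subalg :: "nat \<Rightarrow> (nat \<Rightarrow> 'a::field) set \<Rightarrow> bool" where
  "subalg N S \<longleftrightarrow> S \<subseteq> zass N \<and> (\<lambda>_. 0) \<in> S
     \<and> (\<forall>u\<in>S. \<forall>v\<in>S. (\<lambda>i. u i + v i) \<in> S)
     \<and> (\<forall>c. \<forall>u\<in>S. (\<lambda>i. c * u i) \<in> S)
     \<and> (\<forall>u\<in>S. \<forall>v\<in>S. zbr N u v \<in> S)"

definition zass0 :: "nat \<Rightarrow> (nat \<Rightarrow> 'a::field) set" where
  "zass0 N = {v \<in> zass N. v 0 = 0}"

definition gen :: "nat \<Rightarrow> (nat \<Rightarrow> 'a::field) set \<Rightarrow> (nat \<Rightarrow> 'a) set" where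
  "gen N X = \<Inter>{S. subalg N S \<and> X \<subseteq> S}"

definition covers :: "nat \<Rightarrow> (nat \<Rightarrow> 'a::field) set \<Rightarrow> (nat \<Rightarrow> 'a) set \<Rightarrow> bool" where
  "covers N B A \<longleftrightarrow> subalg N A \<and> subalg N B \<and> A \<subset> B
     \<and> (\<forall>C. subalg N C \<and> A \<subseteq> C \<and> C \<subseteq> B \<longrightarrow> C = A \<or> C = B)"

definition upper_modular :: "nat \<Rightarrow> (nat \<Rightarrow> 'a::field) set \<Rightarrow> bool" where
  "upper_modular N U \<longleftrightarrow> (\<forall>B. subalg N B \<and> covers N B (U \<inter> B) \<longrightarrow> covers N (gen N (U \<union> B)) U)"

definition lower_modular :: "nat \<Rightarrow> (nat \<Rightarrow> 'a::field) set \<Rightarrow> bool" where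
  "lower_modular N U \<longleftrightarrow> (\<forall>B. subalg N B \<and> covers N (gen N (U \<union> B)) U \<longrightarrow> covers N B (U \<inter> B))"

definition semi_modular :: "nat \<Rightarrow> (nat \<Rightarrow> 'a::field) set \<Rightarrow> bool" where
  "semi_modular N U \<longleftrightarrow> upper_modular N U \<and> lower_modular N U"

end

theory Submission
  imports Defs
begin

(* The argument only uses that N = 0 and 2 \<noteq> 0 in the field and that N \<ge> 5.

   (1) W_0 = zass0 N has codimension one and every vector outside it has a non-zero
       e_0-coordinate, so for every subalgebra D either D \<subseteq> W_0 or W_0 \<inter> D is maximal in D.
       This alone makes W_0 upper and lower modular.
   (2) Let U be proper, non-zero and semi-modular.  Two tools: for x \<notin> U with [x,x] = 0,
       upper modularity says that \<langle>U,x\<rangle> covers U; and if \<langle>U,x\<rangle> contains commuting e_a, e_b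
       with e_b \<notin> U, lower modularity applied to span{e_a,e_b} puts some e_a + c e_b into U.
       (a) If some u \<in> U has u_0 \<noteq> 0, then U and e_{N-1} generate W, and the tools give
           e_2 + c e_{N-1}, e_{N-2} + d e_{N-1} \<in> U, whose bracket is 2 e_{N-1} \<notin> U.
       (b) Otherwise U \<subseteq> W_0, and upper modularity for the line of e_0 makes U stable under
           u \<mapsto> [e_0,u], so U = span{e_1,...,e_T}.  T = N-1 gives U = W_0, T = N-2 fails because
           [e_2,e_{N-2}] = 2 e_{N-1}, and T \<le> N-3 fails by the second tool for x = e_{N-2} + e_{N-1}. *)

lemma subalg_subset: "subalg N S \<Longrightarrow> S \<subseteq> zass N"
  unfolding subalg_def by blast
lemma subalg_zass: "subalg N S \<Longrightarrow> u \<in> S \<Longrightarrow> u \<in> zass N"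
  unfolding subalg_def by blast
lemma subalg_zero: "subalg N S \<Longrightarrow> (\<lambda>_. 0) \<in> S"
  unfolding subalg_def by blast
lemma subalg_add: "subalg N S \<Longrightarrow> u \<in> S \<Longrightarrow> v \<in> S \<Longrightarrow> (\<lambda>i. u i + v i) \<in> S"
  unfolding subalg_def by blast
lemma subalg_scale: "subalg N S \<Longrightarrow> u \<in> S \<Longrightarrow> (\<lambda>i. c * u i) \<in> S"
  unfolding subalg_def by blast
lemma subalg_br: "subalg N S \<Longrightarrow> u \<in> S \<Longrightarrow> v \<in> S \<Longrightarrow> zbr N u v \<in> S"
  unfolding subalg_def by blast

lemma subalg_lin: "subalg N S \<Longrightarrow> u \<in> S \<Longrightarrow> v \<in> S \<Longrightarrow> (\<lambda>i. a * u i + b * v i) \<in> S"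
  by (intro subalg_add subalg_scale)

lemma subalg_unscale:
  assumes S: "subalg N S" and cx: "(\<lambda>k. c * x k) \<in> S" and c: "c \<noteq> 0"
  shows "x \<in> S"
proof -
  have "(\<lambda>k. inverse c * (c * x k)) \<in> S" by (rule subalg_scale[OF S cx])
  moreover have "(\<lambda>k. inverse c * (c * x k)) = x" using c by (simp add: fun_eq_iff)
  ultimately show ?thesis by simp
qed

lemma subalg_sum:
  assumes S: "subalg N S" and J: "finite J" and f: "\<And>j. j \<in> J \<Longrightarrow> f j \<in> S"
  shows "(\<lambda>k. \<Sum>j\<in>J. c j * f j k) \<in> S"
  using J f
proof (induction J rule: finite_induct)
  case empty
  then show ?case using subalg_zero[OF S] by simp
next
  case (insert x F)
  have "(\<lambda>k. c x * f x k + (\<Sum>j\<in>F. c j * f j k)) \<in> S"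
    using insert by (intro subalg_add[OF S] subalg_scale[OF S]) auto
  then show ?case using insert by simp
qed

lemma zass_subalg: "subalg N (zass N :: (nat \<Rightarrow> 'a::field) set)"
  unfolding subalg_def by (simp add: zass_def zbr_def)

lemma subalg_Int: "subalg N A \<Longrightarrow> subalg N B \<Longrightarrow> subalg N (A \<inter> B)"
  unfolding subalg_def by blast

definition evec :: "nat \<Rightarrow> nat \<Rightarrow> 'a::field" where
  "evec i = (\<lambda>k. if k = i then 1 else 0)"

lemma evec_zass: "i < N \<Longrightarrow> evec i \<in> zass N"
  by (simp add: evec_def zass_def)

lemma evec_nonzero: "evec a \<noteq> (\<lambda>_. 0::'a::field)"
  by (auto simp: evec_def fun_eq_iff)

lemma sum_evec: "(\<Sum>j\<in>J. c j * evec j k) = (if k \<in> J \<and> finite J then c k else (0::'a::field))"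
proof -
  have "(\<Sum>j\<in>J. c j * evec j k) = (\<Sum>j\<in>J. if k = j then c j else (0::'a))"
    by (rule sum.cong) (auto simp: evec_def)
  then show ?thesis by (cases "finite J") simp_all
qed

lemma subalg_supported:
  assumes S: "subalg N S" and J: "J \<subseteq> {..<N}" and e: "\<And>j. j \<in> J \<Longrightarrow> evec j \<in> S"
    and v: "\<And>k. k \<notin> J \<Longrightarrow> v k = 0"
  shows "v \<in> S"
proof -
  have fJ: "finite J" using J finite_subset by blast
  have "(\<lambda>k. \<Sum>j\<in>J. v j * evec j k) \<in> S" by (rule subalg_sum[OF S fJ e])
  moreover have "(\<lambda>k. \<Sum>j\<in>J. v j * evec j k) = v"
    using fJ v by (auto simp: fun_eq_iff sum_evec)
  ultimately show ?thesis by simp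
qed

lemma subalg_all_evec:
  assumes S: "subalg N S" and e: "\<And>k. k < N \<Longrightarrow> evec k \<in> S"
  shows "S = zass N"
proof
  show "S \<subseteq> zass N" by (rule subalg_subset[OF S])
  show "zass N \<subseteq> S"
  proof
    fix v :: "nat \<Rightarrow> 'a" assume v: "v \<in> zass N"
    show "v \<in> S"
      by (rule subalg_supported[OF S, of "{..<N}"]) (use v in \<open>auto simp: e zass_def not_less\<close>)
  qed
qed

lemma evec_isolate:
  assumes S: "subalg N S" and w: "w \<in> S" and wa: "w a \<noteq> 0"
    and others: "\<And>m. m < N \<Longrightarrow> m \<noteq> a \<Longrightarrow> w m \<noteq> 0 \<Longrightarrow> evec m \<in> S"
  shows "(evec a :: nat \<Rightarrow> 'a::field) \<in> S"
proof -
  have wz: "w \<in> zass N" by (rule subalg_zass[OF S w])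
  define r where "r = (\<lambda>k. if k = a then 0 else w k)"
  have "r \<in> S"
    by (rule subalg_supported[OF S, of "{m. m < N \<and> m \<noteq> a \<and> w m \<noteq> 0}"])
       (use wz others in \<open>auto simp: r_def zass_def not_less\<close>)
  then have "(\<lambda>k. 1 * w k + (-1) * r k) \<in> S" by (rule subalg_lin[OF S w])
  moreover have "(\<lambda>k. 1 * w k + (-1) * r k) = (\<lambda>k. w a * evec a k)"
    by (auto simp: fun_eq_iff r_def evec_def)
  ultimately show ?thesis using subalg_unscale[OF S _ wa] by simp
qed

section \<open>The bracket\<close>

lemma zbr_evec_left:
  assumes i: "i < N" and v: "v \<in> zass N"
  shows "zbr N (evec i) v =
    (\<lambda>k. if k < N \<and> i \<le> k + 1 then v (k + 1 - i) * zc i (k + 1 - i) else 0)"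
proof
  fix k
  show "zbr N (evec i) v k = (if k < N \<and> i \<le> k + 1 then v (k + 1 - i) * zc i (k + 1 - i) else 0)"
  proof (cases "k < N")
    case True
    have inner: "(\<Sum>i'<N. if i' + j = k + 1 then evec i i' * v j * zc i' j else 0)
        = (if i + j = k + 1 then v j * zc i j else 0)" for j
    proof -
      have "(\<Sum>i'<N. if i' + j = k + 1 then evec i i' * v j * zc i' j else 0)
          = (\<Sum>i'<N. if i' = i then (if i + j = k + 1 then v j * zc i j else 0) else 0)"
        by (rule sum.cong) (auto simp: evec_def)
      then show ?thesis using i by simp
    qed
    have "zbr N (evec i) v k
        = (\<Sum>i'<N. \<Sum>j<N. if i' + j = k + 1 then evec i i' * v j * zc i' j else 0)"
      unfolding zbr_def by (simp only: if_P[OF True])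
    also have "\<dots> = (\<Sum>j<N. \<Sum>i'<N. if i' + j = k + 1 then evec i i' * v j * zc i' j else 0)"
      by (rule sum.swap)
    also have "\<dots> = (\<Sum>j<N. if i + j = k + 1 then v j * zc i j else 0)"
      by (rule sum.cong[OF refl inner])
    also have "\<dots> = (\<Sum>j<N. if j = k + 1 - i then (if i \<le> k + 1 then v j * zc i j else 0) else 0)"
      by (rule sum.cong) auto
    also have "\<dots> = (if i \<le> k + 1 then v (k + 1 - i) * zc i (k + 1 - i) else 0)"
      using v by (auto simp: zass_def)
    finally show ?thesis using True by simp
  qed (simp add: zbr_def)
qed

lemma zbr_evec_evec:
  assumes "a < N" "b < N"
  shows "zbr N (evec a) (evec b) = (\<lambda>k. if k < N \<and> k + 1 = a + b then zc a b else (0::'a::field))"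
  using assms unfolding zbr_evec_left[OF assms(1) evec_zass[OF assms(2)]]
  by (auto simp: evec_def fun_eq_iff)

lemma zc_antisym: "zc i j = - (zc j i :: 'a::field)"
  by (simp add: zc_def add.commute)

lemma zbr_antisym: "zbr N u v = (\<lambda>k. - zbr N v u k)"
proof
  fix k
  show "zbr N u v k = - zbr N v u k"
  proof (cases "k < N")
    case True
    have "zbr N v u k = (\<Sum>i<N. \<Sum>j<N. if i + j = k + 1 then v i * u j * zc i j else 0)"
      unfolding zbr_def by (simp only: if_P[OF True])
    also have "\<dots> = (\<Sum>j<N. \<Sum>i<N. if i + j = k + 1 then v i * u j * zc i j else 0)"
      by (rule sum.swap)
    also have "\<dots> = (\<Sum>j<N. \<Sum>i<N. - (if j + i = k + 1 then u j * v i * zc j i else 0))"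
    proof (intro sum.cong refl)
      fix i j
      have "zc i j = - (zc j i :: 'a)" by (rule zc_antisym)
      then show "(if i + j = k + 1 then v i * u j * zc i j else 0)
          = - (if j + i = k + 1 then u j * v i * zc j i else 0)"
        by (simp add: add.commute mult.commute)
    qed
    also have "\<dots> = - zbr N u v k"
      unfolding zbr_def by (simp add: True sum_negf)
    finally show ?thesis by simp
  qed (simp add: zbr_def)
qed

lemma zbr_lin_left:
  "zbr N (\<lambda>k. a * u k + b * v k) w = (\<lambda>k. a * zbr N u w k + b * zbr N v w k)"
proof
  fix k
  show "zbr N (\<lambda>k. a * u k + b * v k) w k = a * zbr N u w k + b * zbr N v w k"
  proof (cases "k < N")
    case True
    have "zbr N (\<lambda>k. a * u k + b * v k) w k =
      (\<Sum>i<N. \<Sum>j<N. a * (if i + j = k + 1 then u i * w j * zc i j else 0)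
                    + b * (if i + j = k + 1 then v i * w j * zc i j else 0))"
      unfolding zbr_def by (simp only: if_P[OF True]) (intro sum.cong refl, simp add: algebra_simps)
    also have "\<dots> = a * zbr N u w k + b * zbr N v w k"
      unfolding zbr_def by (simp only: if_P[OF True] sum.distrib sum_distrib_left)
    finally show ?thesis .
  qed (simp add: zbr_def)
qed

lemma zbr_lin_right:
  "zbr N w (\<lambda>k. a * u k + b * v k) = (\<lambda>k. a * zbr N w u k + b * zbr N w v k)"
  by (subst zbr_antisym)
     (simp add: zbr_lin_left zbr_antisym[of N u w] zbr_antisym[of N v w] algebra_simps)

lemma zbr_zero_sym: "zbr N u v = (\<lambda>_. 0::'a::field) \<Longrightarrow> zbr N v u = (\<lambda>_. 0)"
  by (subst zbr_antisym) simp

lemma zbr_zero_left: "zbr N (\<lambda>_. 0::'a::field) v = (\<lambda>_. 0)"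
  unfolding zbr_def by (rule ext) (simp cong: if_cong)

lemma zc_diag: "zc i i = (0::'a::field)"
  by (simp add: zc_def)

lemma zbr_evec_self: "a < N \<Longrightarrow> zbr N (evec a) (evec a) = (\<lambda>_. 0::'a::field)"
  by (simp add: zbr_evec_evec zc_diag cong: if_cong)

lemma zc_0_left: "1 \<le> j \<Longrightarrow> zc 0 j = (1::'a::field)"
  by (cases j) (simp_all add: zc_def binomial_eq_0)
lemma zc_0_right: "1 \<le> k \<Longrightarrow> zc k 0 = (-1::'a::field)"
  by (cases k) (simp_all add: zc_def binomial_eq_0)
lemma zc_1_left: "zc 1 j = (of_nat j - 1::'a::field)"
  by (cases j) (simp_all add: zc_def binomial_eq_0)

lemma of_nat_diff_N: "(of_nat N :: 'a::ring_1) = 0 \<Longrightarrow> k \<le> N \<Longrightarrow> of_nat (N - k) = (- of_nat k :: 'a)"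
  by (simp add: of_nat_diff)

text \<open>The structure constant of [e_2, e_{N-2}] is C(N-1,2) - (N-1), which is 1 - (-1) = 2 when
  N = 0 in the field.\<close>
lemma zc_2_top:
  assumes N0: "(of_nat N :: 'a::field) = 0" and N4: "N \<ge> 4" and two: "(2::'a) \<noteq> 0"
  shows "zc 2 (N - 2) = (2::'a)"
proof -
  define m where "m = N - 1"
  have m3: "m \<ge> 3" using N4 by (simp add: m_def)
  have idx: "2 + (m - 1) - 1 = m" using N4 by (simp add: m_def)
  have Nm: "N - 2 = m - 1" by (simp add: m_def)
  have c1: "m choose (m - 1) = m"
    using binomial_symmetric[of 1 m] m3 by simp
  have c2: "2 * (m choose 2) = m * (m - 1)"
    unfolding choose_two by (cases "even m") simp_all
  have n1: "(of_nat m :: 'a) = -1" and n2: "(of_nat (m - 1) :: 'a) = -2"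
    using of_nat_diff_N[OF N0, of 1] of_nat_diff_N[OF N0, of 2] N4 by (simp_all add: m_def)
  have "(2::'a) * of_nat (m choose 2) = of_nat m * of_nat (m - 1)"
    using arg_cong[OF c2, of "of_nat :: nat \<Rightarrow> 'a"] by simp
  then have h: "of_nat (m choose 2) = (1::'a)" using two unfolding n1 n2 by simp
  have "zc 2 (N - 2) = (of_nat (m choose 2) - of_nat (m choose (m - 1)) :: 'a)"
    unfolding zc_def Nm idx by (rule refl)
  then show ?thesis unfolding c1 h n1 by simp
qed

lemma zbr_evec_2_top:
  assumes N0: "(of_nat N :: 'a::field) = 0" and N5: "N \<ge> 5" and two: "(2::'a) \<noteq> 0"
  shows "zbr N (evec 2) (evec (N - 2)) = (\<lambda>k. 2 * evec (N - 1) k :: 'a)"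
proof -
  have "2 < N" "N - 2 < N" using N5 by auto
  moreover have "zc 2 (N - 2) = (2::'a)" using zc_2_top[OF N0 _ two] N5 by simp
  ultimately show ?thesis
    using N5 unfolding zbr_evec_evec[OF \<open>2 < N\<close> \<open>N - 2 < N\<close>]
    by (auto simp: fun_eq_iff evec_def)
qed

text \<open>e_{N-1} commutes with every e_a, a \<ge> 2, since e_{a+N-2} = 0.\<close>
lemma zbr_evec_top:
  assumes "2 \<le> a" "a < N"
  shows "zbr N (evec a) (evec (N - 1)) = (\<lambda>_. 0::'a::field)"
proof -
  have "N - 1 < N" using assms by simp
  then show ?thesis using assms unfolding zbr_evec_evec[OF assms(2) \<open>N - 1 < N\<close>]
    by (auto simp: fun_eq_iff)
qed

lemma zbr_evec0: assumes u: "u \<in> zass N" and N: "0 < N"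
  shows "zbr N (evec 0) u = (\<lambda>k. u (k + 1) :: 'a::field)"
  unfolding zbr_evec_left[OF N u] using u by (auto simp: fun_eq_iff zc_0_left zass_def)

lemma zbr_evec1: assumes "j < N" "1 < N"
  shows "zbr N (evec 1) (evec j) = (\<lambda>k. zc 1 j * evec j k :: 'a::field)"
  unfolding zbr_evec_evec[OF assms(2) assms(1)] using assms by (auto simp: fun_eq_iff evec_def)

lemma gen_subalg:
  assumes X: "X \<subseteq> zass N" shows "subalg N (gen N X :: (nat \<Rightarrow> 'a::field) set)"
  unfolding subalg_def
proof (intro conjI ballI allI)
  show "gen N X \<subseteq> zass N" unfolding gen_def using zass_subalg X by blast
qed (auto simp: gen_def subalg_def)

lemma gen_sup: "X \<subseteq> gen N X"
  unfolding gen_def by blast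

lemma gen_least: "subalg N S \<Longrightarrow> X \<subseteq> S \<Longrightarrow> gen N X \<subseteq> S"
  unfolding gen_def by blast

lemma covers_maximal:
  assumes "covers N B A" "subalg N C" "A \<subseteq> C" "C \<subseteq> B" shows "C = A \<or> C = B"
  using assms(1)[unfolded covers_def] assms(2-4) by (elim conjE) blast

lemma subalg_gen_Un: "subalg N A \<Longrightarrow> subalg N B \<Longrightarrow> subalg N (gen N (A \<union> B))"
  by (intro gen_subalg) (use subalg_subset in blast)

lemma covers_gen_eq:
  assumes cov: "covers N G U" and B: "subalg N B" and BG: "B \<subseteq> G" and BU: "\<not> B \<subseteq> U"
  shows "gen N (U \<union> B) = G"
proof -
  have U: "subalg N U" and G: "subalg N G" and UG: "U \<subseteq> G"
    using cov by (auto simp: covers_def)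
  have "U \<subseteq> gen N (U \<union> B)" and "B \<subseteq> gen N (U \<union> B)"
    using gen_sup by blast+
  moreover have "gen N (U \<union> B) \<subseteq> G" using gen_least[OF G] UG BG by blast
  ultimately show ?thesis using covers_maximal[OF cov subalg_gen_Un[OF U B]] BU by blast
qed

lemma zero_subalg: "subalg N {(\<lambda>_. 0::'a::field)}"
  unfolding subalg_def by (auto simp: zass_def zbr_zero_left)

section \<open>Lines and two-dimensional abelian subalgebras\<close>

definition line :: "(nat \<Rightarrow> 'a::field) \<Rightarrow> (nat \<Rightarrow> 'a) set" where
  "line x = {y. \<exists>c. y = (\<lambda>k. c * x k)}"

lemma line_mem: "x \<in> line x"
  unfolding line_def by (rule CollectI, rule exI[of _ 1]) simp

lemma line_least: "subalg N S \<Longrightarrow> x \<in> S \<Longrightarrow> line x \<subseteq> S"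
  using subalg_scale by (auto simp: line_def)

lemma line_subalg:
  assumes x: "x \<in> zass N" and xx: "zbr N x x = (\<lambda>_. 0)"
  shows "subalg N (line x)"
  unfolding subalg_def
proof (intro conjI ballI allI)
  show "line x \<subseteq> zass N" using x by (auto simp: line_def zass_def)
  show "(\<lambda>_. 0) \<in> line x" unfolding line_def by (rule CollectI, rule exI[of _ 0]) simp
next
  fix u v assume "u \<in> line x" "v \<in> line x"
  then obtain c d where u: "u = (\<lambda>k. c * x k)" and v: "v = (\<lambda>k. d * x k)"
    by (auto simp: line_def)
  show "(\<lambda>i. u i + v i) \<in> line x" unfolding line_def u v
    by (rule CollectI, rule exI[of _ "c + d"]) (simp add: algebra_simps)
  have "zbr N u v = (\<lambda>k. c * zbr N x v k + 0 * zbr N x v k)"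
    using zbr_lin_left[of N c x 0 x v] unfolding u by simp
  also have "\<dots> = (\<lambda>k. 0 * x k)"
    unfolding v using zbr_lin_right[of N x d x 0 x] xx by simp
  finally show "zbr N u v \<in> line x" unfolding line_def by blast
next
  fix c u assume "u \<in> line x"
  then obtain d where u: "u = (\<lambda>k. d * x k)" by (auto simp: line_def)
  show "(\<lambda>i. c * u i) \<in> line x" unfolding line_def u
    by (rule CollectI, rule exI[of _ "c * d"]) (simp add: algebra_simps)
qed

lemma line_meet:
  assumes S: "subalg N S" and y: "y \<in> S \<inter> line x" and y0: "y \<noteq> (\<lambda>_. 0)"
  shows "x \<in> S"
proof -
  obtain c where yc: "y = (\<lambda>k. c * x k)" using y by (auto simp: line_def)
  have "c \<noteq> 0" using y0 yc by auto
  then show ?thesis using subalg_unscale[OF S] y yc by blast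
qed

lemma covers_line_zero:
  assumes x: "x \<in> zass N" and xx: "zbr N x x = (\<lambda>_. 0)" and x0: "x \<noteq> (\<lambda>_. 0::'a::field)"
  shows "covers N (line x) {\<lambda>_. 0}"
  unfolding covers_def
proof (intro conjI allI impI)
  show "subalg N {(\<lambda>_. 0::'a)}" by (rule zero_subalg)
  show L: "subalg N (line x)" by (rule line_subalg[OF x xx])
  show "{\<lambda>_. 0} \<subset> line x" using line_mem[of x] x0 subalg_zero[OF L] by blast
  fix C assume C: "subalg N C \<and> {\<lambda>_. 0} \<subseteq> C \<and> C \<subseteq> line x"
  show "C = {\<lambda>_. 0} \<or> C = line x"
  proof (cases "C \<subseteq> {\<lambda>_. 0}")
    case False
    then obtain y where "y \<in> C" "y \<noteq> (\<lambda>_. 0)" by blast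
    then have "x \<in> C" using line_meet[of N C y x] C by blast
    then show ?thesis using line_least C by blast
  qed (use C in blast)
qed

lemma upper_modular_line:
  assumes um: "upper_modular N U" and U: "subalg N U" and x: "x \<in> zass N"
    and xx: "zbr N x x = (\<lambda>_. 0)" and xU: "x \<notin> U"
  shows "covers N (gen N (U \<union> line x)) U"
proof -
  have x0: "x \<noteq> (\<lambda>_. 0)" using xU subalg_zero[OF U] by blast
  have "U \<inter> line x = {\<lambda>_. 0}"
    using line_meet[OF U _ _] xU subalg_zero[OF U] subalg_zero[OF line_subalg[OF x xx]] by blast
  then have "covers N (line x) (U \<inter> line x)" using covers_line_zero[OF x xx x0] by simp
  then show ?thesis using um line_subalg[OF x xx] unfolding upper_modular_def by blast
qed

definition span2 :: "nat \<Rightarrow> nat \<Rightarrow> (nat \<Rightarrow> 'a::field) set" where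
  "span2 a b = {y. \<exists>c d. y = (\<lambda>k. c * evec a k + d * evec b k)}"

lemma evec_mem_span2: "evec a \<in> span2 a b" "evec b \<in> span2 a b"
  unfolding span2_def
  by (rule CollectI, rule exI[of _ 1], rule exI[of _ 0], simp)
     (rule CollectI, rule exI[of _ 0], rule exI[of _ 1], simp)

lemma span2_abelian:
  assumes a: "a < N" and b: "b < N" and ab: "zbr N (evec a) (evec b) = (\<lambda>_. 0::'a::field)"
    and u: "u \<in> span2 a b" and v: "v \<in> span2 a b"
  shows "zbr N u v = (\<lambda>_. 0::'a)"
proof -
  obtain c d c' d' where u: "u = (\<lambda>k. c * evec a k + d * evec b k)"
    and v: "v = (\<lambda>k. c' * evec a k + d' * evec b k)"
    using u v by (auto simp: span2_def)
  have ba: "zbr N (evec b) (evec a) = (\<lambda>_. 0::'a)" by (rule zbr_zero_sym[OF ab])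
  show ?thesis unfolding u v zbr_lin_left zbr_lin_right
    by (simp add: ab ba zbr_evec_self[OF a] zbr_evec_self[OF b])
qed

lemma span2_subalg:
  assumes a: "a < N" and b: "b < N" and ab: "zbr N (evec a) (evec b) = (\<lambda>_. 0::'a::field)"
  shows "subalg N (span2 a b :: (nat \<Rightarrow> 'a) set)"
  unfolding subalg_def
proof (intro conjI ballI allI)
  show "span2 a b \<subseteq> zass N" using a b by (auto simp: span2_def zass_def evec_def)
  show "(\<lambda>_. 0) \<in> span2 a b"
    unfolding span2_def by (rule CollectI, rule exI[of _ 0], rule exI[of _ 0]) simp
next
  fix u v :: "nat \<Rightarrow> 'a" assume u: "u \<in> span2 a b" and v: "v \<in> span2 a b"
  then obtain c d c' d' where "u = (\<lambda>k. c * evec a k + d * evec b k)"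
    and "v = (\<lambda>k. c' * evec a k + d' * evec b k)" by (auto simp: span2_def)
  then show "(\<lambda>i. u i + v i) \<in> span2 a b" unfolding span2_def
    by (intro CollectI exI[of _ "c + c'"] exI[of _ "d + d'"]) (simp add: algebra_simps)
  show "zbr N u v \<in> span2 a b" unfolding span2_abelian[OF a b ab u v] span2_def
    by (intro CollectI exI[of _ 0]) simp
next
  fix e u assume "u \<in> span2 a b"
  then obtain c d where u: "u = (\<lambda>k. c * evec a k + d * evec b k)" by (auto simp: span2_def)
  show "(\<lambda>i. e * u i) \<in> span2 a b" unfolding span2_def u
    by (intro CollectI exI[of _ "e * c"] exI[of _ "e * d"]) (simp add: algebra_simps)
qed

text \<open>The chain 0 \<subset> line e_a \<subset> span{e_a,e_b} shows that span{e_a,e_b} does not cover 0.\<close>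
lemma span2_not_covers_zero:
  assumes a: "a < N" and b: "b < N" and ab: "a \<noteq> b"
    and abz: "zbr N (evec a) (evec b) = (\<lambda>_. 0::'a::field)"
  shows "\<not> covers N (span2 a b :: (nat \<Rightarrow> 'a) set) {\<lambda>_. 0}"
proof
  assume cov: "covers N (span2 a b :: (nat \<Rightarrow> 'a) set) {\<lambda>_. 0}"
  have la: "subalg N (line (evec a) :: (nat \<Rightarrow> 'a) set)"
    by (rule line_subalg[OF evec_zass[OF a] zbr_evec_self[OF a]])
  have "{\<lambda>_. 0} \<subseteq> line (evec a :: nat \<Rightarrow> 'a)" using subalg_zero[OF la] by blast
  moreover have "line (evec a) \<subseteq> (span2 a b :: (nat \<Rightarrow> 'a) set)"
    by (rule line_least[OF span2_subalg[OF a b abz] evec_mem_span2(1)])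
  ultimately have "line (evec a) = {\<lambda>_. 0::'a} \<or> line (evec a) = (span2 a b :: (nat \<Rightarrow> 'a) set)"
    by (rule covers_maximal[OF cov la])
  moreover have "line (evec a) \<noteq> {\<lambda>_. 0::'a}" using line_mem[of "evec a"] evec_nonzero[of a] by blast
  moreover have "(evec b :: nat \<Rightarrow> 'a) \<notin> line (evec a)"
  proof
    assume "(evec b :: nat \<Rightarrow> 'a) \<in> line (evec a)"
    then obtain c where "(evec b :: nat \<Rightarrow> 'a) = (\<lambda>k. c * evec a k)" by (auto simp: line_def)
    then have "evec b b = c * (evec a b :: 'a)" by (rule fun_cong)
    with ab show False by (simp add: evec_def)
  qed
  ultimately show False using evec_mem_span2(2)[of b a] by blast
qed

lemma lower_modular_partner:
  fixes U G :: "(nat \<Rightarrow> 'a::field) set"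
  assumes lm: "lower_modular N U" and cov: "covers N G U"
    and a: "a < N" and b: "b < N" and ab: "a \<noteq> b"
    and abz: "zbr N (evec a) (evec b) = (\<lambda>_. 0::'a)"
    and aG: "evec a \<in> G" and bG: "evec b \<in> G" and bU: "evec b \<notin> U"
  obtains c where "(\<lambda>k. evec a k + c * evec b k) \<in> U"
proof -
  let ?B = "span2 a b :: (nat \<Rightarrow> 'a) set"
  have U: "subalg N U" and G: "subalg N G" using cov by (auto simp: covers_def)
  have B: "subalg N ?B" by (rule span2_subalg[OF a b abz])
  have "?B \<subseteq> G" using subalg_lin[OF G aG bG] by (auto simp: span2_def)
  then have "gen N (U \<union> ?B) = G"
    using covers_gen_eq[OF cov B] evec_mem_span2(2) bU by blast
  then have cB: "covers N ?B (U \<inter> ?B)" using lm B cov unfolding lower_modular_def by auto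
  have "U \<inter> ?B \<noteq> {\<lambda>_. 0}" using cB span2_not_covers_zero[OF a b ab abz] by auto
  then obtain y where y: "y \<in> U" "y \<in> ?B" "y \<noteq> (\<lambda>_. 0)"
    using subalg_zero[OF U] subalg_zero[OF B] by blast
  then obtain c d where yc: "y = (\<lambda>k. c * evec a k + d * evec b k)" by (auto simp: span2_def)
  have "c \<noteq> 0"
  proof
    assume "c = 0"
    then have "d \<noteq> 0" and "y = (\<lambda>k. d * evec b k)" using y yc by auto
    then show False using subalg_unscale[OF U] y bU by blast
  qed
  moreover have "(\<lambda>k. c * (evec a k + (d / c) * evec b k)) = y"
    using \<open>c \<noteq> 0\<close> yc by (auto simp: fun_eq_iff field_simps)
  ultimately show ?thesis using that subalg_unscale[OF U] y(1) by metis
qed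

section \<open>W_0 is a semi-modular subalgebra\<close>

text \<open>W_0 is closed under the bracket: [u,v]_0 = u_0 v_1 - u_1 v_0 vanishes if u_0 = v_0 = 0.\<close>
lemma zass0_subalg: "subalg N (zass0 N :: (nat \<Rightarrow> 'a::field) set)"
proof -
  have "zbr N u v 0 = 0" if "u 0 = 0" "v 0 = 0" for u v :: "nat \<Rightarrow> 'a"
  proof -
    have "(\<Sum>i<N. \<Sum>j<N. if i + j = 0 + 1 then u i * v j * zc i j else (0::'a)) = 0"
    proof (intro sum.neutral ballI)
      fix i j
      show "(if i + j = 0 + 1 then u i * v j * zc i j else (0::'a)) = 0"
        using that by (cases i; cases j; simp)
    qed
    then show ?thesis by (simp add: zbr_def)
  qed
  moreover have "zbr N u v \<in> zass N" for u v :: "nat \<Rightarrow> 'a" by (simp add: zbr_def zass_def)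
  ultimately show ?thesis unfolding subalg_def zass0_def by (auto simp: zass_def)
qed

text \<open>W_0 has codimension one: a subalgebra C \<subseteq> D containing W_0 \<inter> D but not contained in
  W_0 contains a vector c with c_0 \<noteq> 0, and v - (v_0/c_0) c \<in> W_0 \<inter> D for every v \<in> D.\<close>
lemma zass0_codim_one:
  fixes C D :: "(nat \<Rightarrow> 'a::field) set"
  assumes D: "subalg N D" and C: "subalg N C" and sub: "zass0 N \<inter> D \<subseteq> C" "C \<subseteq> D"
    and CW: "\<not> C \<subseteq> zass0 N"
  shows "C = D"
proof
  obtain c where c: "c \<in> C" "c \<notin> zass0 N" using CW by blast
  then have c0: "c 0 \<noteq> 0" using subalg_zass[OF C] by (auto simp: zass0_def)
  show "D \<subseteq> C"
  proof
    fix v assume v: "v \<in> D"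
    define a where "a = v 0 / c 0"
    have w: "(\<lambda>i. 1 * v i + (- a) * c i) \<in> D" using subalg_lin[OF D v] c sub by blast
    moreover have "v 0 + (- a) * c 0 = 0" using c0 by (simp add: a_def)
    ultimately have "(\<lambda>i. 1 * v i + (- a) * c i) \<in> C"
      using subalg_zass[OF D w] sub by (auto simp: zass0_def)
    from subalg_lin[OF C this c(1), of 1 a] show "v \<in> C" by simp
  qed
qed (use sub in blast)

lemma covers_zass0_Int:
  fixes D :: "(nat \<Rightarrow> 'a::field) set"
  assumes D: "subalg N D" and DW: "\<not> D \<subseteq> zass0 N"
  shows "covers N D (zass0 N \<inter> D)"
  unfolding covers_def
proof (intro conjI allI impI)
  show "subalg N (zass0 N \<inter> D)" by (rule subalg_Int[OF zass0_subalg D])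
  show "zass0 N \<inter> D \<subset> D" using DW by blast
  fix C assume "subalg N C \<and> zass0 N \<inter> D \<subseteq> C \<and> C \<subseteq> D"
  then show "C = zass0 N \<inter> D \<or> C = D"
    using zass0_codim_one[OF D, of C] by blast
qed (rule D)

text \<open>Part (1).  In both modularity conditions the subalgebra B is not contained in W_0, hence
  neither is \<langle>W_0,B\<rangle>, and the required covering is an instance of covers_zass0_Int.\<close>
theorem zass0_semi_modular: "semi_modular N (zass0 N :: (nat \<Rightarrow> 'a::field) set)"
  unfolding semi_modular_def upper_modular_def lower_modular_def
proof (intro conjI allI impI; elim conjE)
  fix B :: "(nat \<Rightarrow> 'a) set"
  assume B: "subalg N B" and cov: "covers N B (zass0 N \<inter> B)"
  let ?G = "gen N (zass0 N \<union> B)"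
  have "zass0 N \<union> B \<subseteq> ?G" by (rule gen_sup)
  moreover have "\<not> B \<subseteq> zass0 N" using cov unfolding covers_def by blast
  ultimately have "covers N ?G (zass0 N \<inter> ?G)"
    using covers_zass0_Int[OF subalg_gen_Un[OF zass0_subalg B]] by blast
  then show "covers N ?G (zass0 N)" using \<open>zass0 N \<union> B \<subseteq> ?G\<close> by (simp add: Int_absorb2)
next
  fix B :: "(nat \<Rightarrow> 'a) set"
  assume B: "subalg N B" and cov: "covers N (gen N (zass0 N \<union> B)) (zass0 N)"
  have "\<not> B \<subseteq> zass0 N"
  proof
    assume "B \<subseteq> zass0 N"
    then have "gen N (zass0 N \<union> B) \<subseteq> zass0 N" by (intro gen_least[OF zass0_subalg]) blast
    with cov show False unfolding covers_def by blast
  qed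
  then show "covers N B (zass0 N \<inter> B)" by (rule covers_zass0_Int[OF B])
qed

section \<open>Semi-modular subalgebras not contained in W_0\<close>

text \<open>If S contains u with u_0 \<noteq> 0 and all e_m with m \<ge> k \<ge> 1, then [e_k,u] has non-zero
  e_{k-1}-coordinate -u_0 and lower coordinates zero, so S also contains e_{k-1}.\<close>
lemma evec_step_down:
  fixes S :: "(nat \<Rightarrow> 'a::field) set"
  assumes S: "subalg N S" and u: "u \<in> S" "u 0 \<noteq> 0" and k: "1 \<le> k" "k < N"
    and above: "\<And>m. k \<le> m \<Longrightarrow> m < N \<Longrightarrow> evec m \<in> S"
  shows "evec (k - 1) \<in> S"
proof -
  define w where "w = zbr N (evec k) u"
  have wS: "w \<in> S" unfolding w_def using subalg_br[OF S above[OF order_refl k(2)] u(1)] .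
  have wf: "w = (\<lambda>m. if m < N \<and> k \<le> m + 1 then u (m + 1 - k) * zc k (m + 1 - k) else 0)"
    unfolding w_def by (rule zbr_evec_left[OF k(2) subalg_zass[OF S u(1)]])
  have "w (k - 1) \<noteq> 0" using k u(2) by (simp add: wf zc_0_right)
  then show ?thesis
  proof (rule evec_isolate[OF S wS])
    fix m assume "m < N" "m \<noteq> k - 1" "w m \<noteq> 0"
    then show "evec m \<in> S" using above by (auto simp: wf split: if_splits)
  qed
qed

lemma generates_all:
  fixes S :: "(nat \<Rightarrow> 'a::field) set"
  assumes S: "subalg N S" and u: "u \<in> S" "u 0 \<noteq> 0" and top: "evec (N - 1) \<in> S"
  shows "S = zass N"
proof (rule subalg_all_evec[OF S])
  have "\<forall>m. n \<le> m \<and> m < N \<longrightarrow> evec m \<in> S" if "n \<le> N - 1" for n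
    using that
  proof (induction n rule: inc_induct)
    case base
    show ?case
    proof (intro allI impI)
      fix m assume "N - 1 \<le> m \<and> m < N"
      then have "m = N - 1" by linarith
      then show "evec m \<in> S" using top by simp
    qed
  next
    case (step n)
    then have "evec n \<in> S" using evec_step_down[OF S u, of "Suc n"] by auto
    show ?case
    proof (intro allI impI)
      fix m assume "n \<le> m \<and> m < N"
      then consider "m = n" | "Suc n \<le> m \<and> m < N" by linarith
      then show "evec m \<in> S" using \<open>evec n \<in> S\<close> step.IH by cases blast+
    qed
  qed
  then show "\<And>k. k < N \<Longrightarrow> evec k \<in> S" by auto
qed

lemma zbr_partners_top:
  assumes N0: "(of_nat N :: 'a::field) = 0" and N5: "N \<ge> 5" and two: "(2::'a) \<noteq> 0"
  shows "zbr N (\<lambda>k. evec 2 k + c * evec (N - 1) k) (\<lambda>k. evec (N - 2) k + d * evec (N - 1) k)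
    = (\<lambda>k. 2 * evec (N - 1) k :: 'a)"
proof -
  have t: "N - 1 < N" using N5 by simp
  have top_2: "zbr N (evec 2) (evec (N - 1)) = (\<lambda>_. 0::'a)"
    using N5 by (intro zbr_evec_top) auto
  have "zbr N (evec (N - 2)) (evec (N - 1)) = (\<lambda>_. 0::'a)"
    using N5 by (intro zbr_evec_top) auto
  then have top_N2: "zbr N (evec (N - 1)) (evec (N - 2)) = (\<lambda>_. 0::'a)" by (rule zbr_zero_sym)
  have one: "(\<lambda>k. evec i k + e * evec (N - 1) k) = (\<lambda>k. 1 * evec i k + e * evec (N - 1) k)"
    for i and e :: 'a by simp
  show ?thesis
    unfolding one zbr_lin_left zbr_lin_right zbr_evec_2_top[OF N0 N5 two] top_2 top_N2
      zbr_evec_self[OF t] by simp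
qed

lemma semi_modular_outside_zass0:
  fixes U :: "(nat \<Rightarrow> 'a::field) set"
  assumes N0: "(of_nat N :: 'a) = 0" and N5: "N \<ge> 5" and two: "(2::'a) \<noteq> 0"
    and U: "subalg N U" and sm: "semi_modular N U" and u: "u \<in> U" "u 0 \<noteq> 0"
  shows "U = zass N"
proof (rule ccontr)
  assume proper: "U \<noteq> zass N"
  have um: "upper_modular N U" and lm: "lower_modular N U" using sm by (auto simp: semi_modular_def)
  let ?t = "N - 1"
  have t: "?t < N" using N5 by simp
  have tU: "evec ?t \<notin> U" using generates_all[OF U u] proper by blast
  have L: "subalg N (line (evec ?t) :: (nat \<Rightarrow> 'a) set)"
    by (rule line_subalg[OF evec_zass[OF t] zbr_evec_self[OF t]])
  have "U \<union> line (evec ?t) \<subseteq> gen N (U \<union> line (evec ?t))" by (rule gen_sup)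
  then have "gen N (U \<union> line (evec ?t)) = zass N"
    using generates_all[of N "gen N (U \<union> line (evec ?t))" u] subalg_gen_Un[OF U L] u line_mem
    by blast
  then have cov: "covers N (zass N) U"
    using upper_modular_line[OF um U evec_zass[OF t] zbr_evec_self[OF t] tU] by simp
  have partner: "\<exists>c. (\<lambda>k. evec a k + c * evec ?t k) \<in> U" if a: "2 \<le> a" "a \<le> N - 2" for a
  proof -
    have "a < N" "a \<noteq> ?t" using a N5 by auto
    with lower_modular_partner[OF lm cov this(1) t this(2) zbr_evec_top[OF a(1) this(1)]
        evec_zass[OF this(1)] evec_zass[OF t] tU]
    show ?thesis by blast
  qed
  have N2: "2 \<le> N - 2" using N5 by simp
  obtain c d where "(\<lambda>k. evec 2 k + c * evec ?t k) \<in> U" "(\<lambda>k. evec (N - 2) k + d * evec ?t k) \<in> U"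
    using partner[OF order_refl N2] partner[OF N2 order_refl] by blast
  from subalg_br[OF U this] have "(\<lambda>k. 2 * evec ?t k) \<in> U"
    unfolding zbr_partners_top[OF N0 N5 two] .
  with tU two show False using subalg_unscale[OF U] by blast
qed

section \<open>Semi-modular subalgebras inside W_0\<close>

text \<open>The shift u \<mapsto> (0, u_2, u_3, ...): the derivation ad e_0 followed by the projection to W_0.\<close>
definition dshift :: "(nat \<Rightarrow> 'a::field) \<Rightarrow> nat \<Rightarrow> 'a" where
  "dshift u = (\<lambda>k. if k = 0 then 0 else u (Suc k))"

text \<open>For U \<subseteq> W_0 upper modular, \<langle>U,e_0\<rangle> covers U, so \<langle>U,e_0\<rangle> \<inter> W_0 = U; since
  dshift u = [e_0,u] - u_1 e_0 lies in that intersection, U is stable under dshift.\<close>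
lemma upper_modular_dshift:
  fixes U :: "(nat \<Rightarrow> 'a::field) set"
  assumes um: "upper_modular N U" and U: "subalg N U" and UW: "U \<subseteq> zass0 N"
    and N: "0 < N" and u: "u \<in> U"
  shows "dshift u \<in> U"
proof -
  have e0: "evec 0 \<in> zass N" by (rule evec_zass[OF N])
  have e0U: "(evec 0 :: nat \<Rightarrow> 'a) \<notin> U" using UW by (auto simp: zass0_def evec_def)
  let ?G = "gen N (U \<union> line (evec 0))"
  have cov: "covers N ?G U" by (rule upper_modular_line[OF um U e0 zbr_evec_self[OF N] e0U])
  have G: "subalg N ?G" using cov by (simp add: covers_def)
  have "U \<union> line (evec 0) \<subseteq> ?G" by (rule gen_sup)
  then have UG: "U \<subseteq> ?G" and e0G: "evec 0 \<in> ?G" using line_mem by blast+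
  have "?G \<inter> zass0 N = U \<or> ?G \<inter> zass0 N = ?G"
    by (rule covers_maximal[OF cov subalg_Int[OF G zass0_subalg]]) (use UW UG in blast)+
  moreover have "(evec 0 :: nat \<Rightarrow> 'a) \<notin> zass0 N" by (simp add: zass0_def evec_def)
  ultimately have GW: "?G \<inter> zass0 N = U" using e0G by blast
  have uz: "u \<in> zass N" by (rule subalg_zass[OF U u])
  have "zbr N (evec 0) u \<in> ?G" using subalg_br[OF G e0G] UG u by blast
  then have "(\<lambda>k. 1 * zbr N (evec 0) u k + (- u 1) * evec 0 k) \<in> ?G"
    by (rule subalg_lin[OF G _ e0G])
  moreover have "(\<lambda>k. 1 * zbr N (evec 0) u k + (- u 1) * evec 0 k) = dshift u"
    unfolding zbr_evec0[OF uz N] by (auto simp: fun_eq_iff evec_def dshift_def)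
  moreover have "dshift u \<in> zass0 N" using uz by (auto simp: zass0_def zass_def dshift_def)
  ultimately have "dshift u \<in> ?G \<inter> zass0 N" by simp
  then show ?thesis unfolding GW .
qed

lemma dshift_iterate:
  assumes closed: "\<And>u. u \<in> U \<Longrightarrow> dshift u \<in> U" and u: "u \<in> U" "u 0 = 0"
  shows "(\<lambda>k. if k = 0 then 0 else u (k + m)) \<in> U"
proof (induction m)
  case 0
  have "(\<lambda>k. if k = 0 then 0 else u (k + 0)) = u" using u(2) by (auto simp: fun_eq_iff)
  then show ?case using u(1) by simp
next
  case (Suc m)
  have "dshift (\<lambda>k. if k = 0 then 0 else u (k + m)) = (\<lambda>k. if k = 0 then 0 else u (k + Suc m))"
    by (simp add: dshift_def fun_eq_iff)
  then show ?case using closed[OF Suc] by simp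
qed

lemma top_degree:
  fixes U :: "(nat \<Rightarrow> 'a::field) set"
  assumes Uz: "U \<subseteq> zass N" and nz: "\<exists>u\<in>U. u \<noteq> (\<lambda>_. 0)"
  obtains u0 T where "u0 \<in> U" "u0 T \<noteq> 0" "T < N" "\<And>u j. u \<in> U \<Longrightarrow> T < j \<Longrightarrow> u j = 0"
proof -
  define D where "D = {j. \<exists>u\<in>U. u j \<noteq> 0}"
  have "D \<subseteq> {..<N}" using Uz by (auto simp: D_def zass_def not_less[symmetric])
  then have fin: "finite D" by (rule finite_subset) simp
  have "D \<noteq> {}" using nz by (auto simp: D_def fun_eq_iff)
  then have "Max D \<in> D" using fin by (rule Max_in[rotated])
  then obtain u0 where u0: "u0 \<in> U" "u0 (Max D) \<noteq> 0" by (auto simp: D_def)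
  show ?thesis
  proof (rule that[OF u0])
    show "Max D < N" using \<open>Max D \<in> D\<close> \<open>D \<subseteq> {..<N}\<close> by blast
    fix u j assume "u \<in> U" "Max D < j"
    then show "u j = 0" using Max_ge[OF fin, of j] by (force simp: D_def)
  qed
qed

text \<open>A dshift-stable subalgebra U \<subseteq> W_0 of top degree T contains e_1, ..., e_T: shifting the
  top-degree element down to degree k and removing lower terms isolates e_k.\<close>
lemma dshift_stable_basis:
  fixes U :: "(nat \<Rightarrow> 'a::field) set"
  assumes U: "subalg N U" and UW: "U \<subseteq> zass0 N" and closed: "\<And>u. u \<in> U \<Longrightarrow> dshift u \<in> U"
    and u0: "u0 \<in> U" "u0 T \<noteq> 0" and above: "\<And>u j. u \<in> U \<Longrightarrow> T < j \<Longrightarrow> u j = 0"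
    and k: "1 \<le> k" "k \<le> T"
  shows "evec k \<in> U"
  using k
proof (induction k rule: less_induct)
  case (less k)
  define v where "v = (\<lambda>i. if i = 0 then 0 else u0 (i + (T - k)))"
  have u00: "u0 0 = 0" using UW u0(1) by (auto simp: zass0_def)
  have vU: "v \<in> U" unfolding v_def by (rule dshift_iterate[OF closed u0(1) u00])
  have "v k \<noteq> 0" using less.prems u0(2) by (simp add: v_def)
  then show ?case
  proof (rule evec_isolate[OF U vU])
    fix m assume m: "m < N" "m \<noteq> k" "v m \<noteq> 0"
    then have "m \<noteq> 0" and "u0 (m + (T - k)) \<noteq> 0" by (auto simp: v_def split: if_splits)
    moreover have "m + (T - k) \<le> T" using above[OF u0(1)] \<open>u0 (m + (T - k)) \<noteq> 0\<close> not_less by blast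
    ultimately show "evec m \<in> U" using less.IH m(2) less.prems by simp
  qed
qed

lemma zass0_from_basis:
  fixes U :: "(nat \<Rightarrow> 'a::field) set"
  assumes U: "subalg N U" and UW: "U \<subseteq> zass0 N" and e: "\<And>k. 1 \<le> k \<Longrightarrow> k < N \<Longrightarrow> evec k \<in> U"
  shows "U = zass0 N"
proof
  show "zass0 N \<subseteq> U"
  proof
    fix v :: "nat \<Rightarrow> 'a" assume v: "v \<in> zass0 N"
    show "v \<in> U"
      by (rule subalg_supported[OF U, of "{1..<N}"])
         (use v e in \<open>auto simp: zass0_def zass_def not_less_eq_eq\<close>)
  qed
qed (rule UW)

text \<open>Top degree N-2 is impossible: [e_2, e_{N-2}] = 2 e_{N-1} would have degree N-1.\<close>
lemma no_top_degree_N2: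
  fixes U :: "(nat \<Rightarrow> 'a::field) set"
  assumes N0: "(of_nat N :: 'a) = 0" and N5: "N \<ge> 5" and two: "(2::'a) \<noteq> 0"
    and U: "subalg N U" and e: "evec 2 \<in> U" "evec (N - 2) \<in> U"
    and above: "\<And>u. u \<in> U \<Longrightarrow> u (N - 1) = 0"
  shows False
proof -
  have "(\<lambda>k. 2 * evec (N - 1) k :: 'a) \<in> U"
    using subalg_br[OF U e] unfolding zbr_evec_2_top[OF N0 N5 two] .
  from above[OF this] show False using two by (simp add: evec_def)
qed

text \<open>Top degree T \<le> N-3 is impossible: for x = e_{N-2} + e_{N-1} \<notin> U, the covering \<langle>U,x\<rangle>
  contains [e_1,x] + 2x = -e_{N-2} and hence e_{N-1}, and lower modularity then puts
  e_{N-2} + c e_{N-1} into U.\<close>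
lemma no_low_top_degree:
  fixes U :: "(nat \<Rightarrow> 'a::field) set"
  assumes N0: "(of_nat N :: 'a) = 0" and N5: "N \<ge> 5"
    and U: "subalg N U" and um: "upper_modular N U" and lm: "lower_modular N U"
    and e1: "evec 1 \<in> U" and above: "\<And>u. u \<in> U \<Longrightarrow> u (N - 2) = 0 \<and> u (N - 1) = 0"
  shows False
proof -
  let ?a = "N - 2" and ?b = "N - 1"
  have a: "?a < N" and b: "?b < N" and ab: "?a \<noteq> ?b" and one: "1 < N" using N5 by auto
  have abz: "zbr N (evec ?a) (evec ?b) = (\<lambda>_. 0::'a)" using N5 by (intro zbr_evec_top) auto
  define x :: "nat \<Rightarrow> 'a" where "x = (\<lambda>k. 1 * evec ?a k + 1 * evec ?b k)"
  have xB: "x \<in> span2 ?a ?b" unfolding x_def span2_def by blast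
  have xz: "x \<in> zass N" using subalg_zass[OF span2_subalg[OF a b abz] xB] .
  have xx: "zbr N x x = (\<lambda>_. 0)" by (rule span2_abelian[OF a b abz xB xB])
  have xU: "x \<notin> U" using above[of x] ab by (auto simp: x_def evec_def)
  let ?G = "gen N (U \<union> line x)"
  have cov: "covers N ?G U" by (rule upper_modular_line[OF um U xz xx xU])
  have G: "subalg N ?G" using cov by (simp add: covers_def)
  have "U \<union> line x \<subseteq> ?G" by (rule gen_sup)
  then have xG: "x \<in> ?G" and e1G: "evec 1 \<in> ?G" using line_mem e1 by blast+
  have "(of_nat ?a :: 'a) = -2" "(of_nat ?b :: 'a) = -1"
    using of_nat_diff_N[OF N0, of 2] of_nat_diff_N[OF N0, of 1] N5 by simp_all
  then have "zbr N (evec 1) x = (\<lambda>k. (-3) * evec ?a k + (-2) * evec ?b k)"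
    unfolding x_def zbr_lin_right zbr_evec1[OF a one] zbr_evec1[OF b one] zc_1_left
    by (simp add: fun_eq_iff)
  then have "(\<lambda>k. 1 * zbr N (evec 1) x k + 2 * x k) = (\<lambda>k. (-1) * evec ?a k)"
    by (simp add: x_def fun_eq_iff algebra_simps)
  moreover have "(\<lambda>k. 1 * zbr N (evec 1) x k + 2 * x k) \<in> ?G"
    by (rule subalg_lin[OF G subalg_br[OF G e1G xG] xG])
  ultimately have "(\<lambda>k. (-1) * evec ?a k) \<in> ?G" by simp
  then have aG: "evec ?a \<in> ?G" by (rule subalg_unscale[OF G]) simp
  have "(\<lambda>k. 1 * x k + (-1) * evec ?a k) \<in> ?G" by (rule subalg_lin[OF G xG aG])
  moreover have "(\<lambda>k. 1 * x k + (-1) * evec ?a k) = evec ?b" by (simp add: x_def fun_eq_iff)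
  ultimately have bG: "evec ?b \<in> ?G" by simp
  have bU: "evec ?b \<notin> U" using above[of "evec ?b"] by (auto simp: evec_def)
  obtain c where "(\<lambda>k. evec ?a k + c * evec ?b k) \<in> U"
    by (rule lower_modular_partner[OF lm cov a b ab abz aG bG bU])
  from above[OF this] ab show False by (simp add: evec_def)
qed

lemma semi_modular_inside_zass0:
  fixes U :: "(nat \<Rightarrow> 'a::field) set"
  assumes N0: "(of_nat N :: 'a) = 0" and N5: "N \<ge> 5" and two: "(2::'a) \<noteq> 0"
    and U: "subalg N U" and sm: "semi_modular N U" and nz: "U \<noteq> {\<lambda>_. 0}" and UW: "U \<subseteq> zass0 N"
  shows "U = zass0 N"
proof -
  have um: "upper_modular N U" and lm: "lower_modular N U" using sm by (auto simp: semi_modular_def)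
  have closed: "\<And>u. u \<in> U \<Longrightarrow> dshift u \<in> U"
    using upper_modular_dshift[OF um U UW] N5 by simp
  have "\<exists>u\<in>U. u \<noteq> (\<lambda>_. 0)" using nz subalg_zero[OF U] by blast
  then obtain u0 T where u0: "u0 \<in> U" "u0 T \<noteq> 0" and T: "T < N"
    and above: "\<And>u j. u \<in> U \<Longrightarrow> T < j \<Longrightarrow> u j = 0"
    using top_degree[OF subalg_subset[OF U]] by blast
  have T1: "1 \<le> T" using u0 UW by (cases T) (auto simp: zass0_def)
  have basis: "evec k \<in> U" if "1 \<le> k" "k \<le> T" for k
    using dshift_stable_basis[OF U UW closed u0] above that by blast
  consider "T = N - 1" | "T = N - 2" | "T < N - 2" using T by linarith
  then show ?thesis
  proof cases
    case 1
    then show ?thesis using zass0_from_basis[OF U UW] basis by simp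
  next
    case 2
    then have False
      using no_top_degree_N2[OF N0 N5 two U] basis above N5 by simp
    then show ?thesis ..
  next
    case 3
    then have False using no_low_top_degree[OF N0 N5 U um lm] basis[OF order_refl T1] above by simp
    then show ?thesis ..
  qed
qed

lemma zass0_nonzero:
  assumes "1 < N" shows "zass0 N \<noteq> {\<lambda>_. 0::'a::field}"
proof
  assume "zass0 N = {\<lambda>_. 0::'a}"
  moreover have "(evec 1 :: nat \<Rightarrow> 'a) \<in> zass0 N"
    using evec_zass[OF assms] by (simp add: zass0_def evec_def)
  ultimately show False using evec_nonzero[of 1, where 'a = 'a] by blast
qed

lemma zass0_proper: "0 < N \<Longrightarrow> zass0 N \<noteq> (zass N :: (nat \<Rightarrow> 'a::field) set)"
  using evec_zass[of 0 N] by (force simp: zass0_def evec_def)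

theorem semi_modular_unique:
  fixes U :: "(nat \<Rightarrow> 'a::field) set"
  assumes N0: "(of_nat N :: 'a) = 0" and N5: "N \<ge> 5" and two: "(2::'a) \<noteq> 0"
    and U: "subalg N U" and nz: "U \<noteq> {\<lambda>_. 0}" and proper: "U \<noteq> zass N"
    and sm: "semi_modular N U"
  shows "U = zass0 N"
proof (cases "\<forall>u\<in>U. u 0 = 0")
  case True
  then have "U \<subseteq> zass0 N" using subalg_subset[OF U] by (auto simp: zass0_def)
  then show ?thesis by (rule semi_modular_inside_zass0[OF N0 N5 two U sm nz])
next
  case False
  then obtain u where "u \<in> U" "u 0 \<noteq> 0" by blast
  then show ?thesis using semi_modular_outside_zass0[OF N0 N5 two U sm] proper by blast
qed

text \<open>In characteristic p > 2 with p^n \<noteq> 3: p^n = 0 and 2 \<noteq> 0 in F, and p^n \<ge> 5; for n = 1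
  this uses p \<noteq> 4, as 4 = 2 * 2 \<noteq> 0 in F.\<close>
lemma char_power_facts:
  assumes p: "CHAR('a::field) = p" "p > 2" and n: "n \<ge> 1" "p ^ n \<noteq> 3"
  shows "(of_nat (p ^ n) :: 'a) = 0" and "p ^ n \<ge> 5" and "(2::'a) \<noteq> 0"
proof -
  show "(of_nat (p ^ n) :: 'a) = 0"
    using p n by (simp add: of_nat_eq_0_iff_char_dvd dvd_power)
  have two_dvd: "(of_nat m :: 'a) = 0 \<longleftrightarrow> p dvd m" for m
    using p(1) by (simp add: of_nat_eq_0_iff_char_dvd)
  show two: "(2::'a) \<noteq> 0" using two_dvd[of 2] p(2) by (auto dest: dvd_imp_le)
  have "p \<noteq> 4"
  proof
    assume "p = 4"
    then have "(4::'a) = 0" using two_dvd[of 4] by simp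
    moreover have "(4::'a) = 2 * 2" by simp
    ultimately show False using two mult_eq_0_iff by metis
  qed
  show "p ^ n \<ge> 5"
  proof (cases "n = 1")
    case True
    then show ?thesis using p(2) n(2) \<open>p \<noteq> 4\<close> by simp
  next
    case False
    then have "p ^ 2 \<le> p ^ n" using p(2) n(1) by (intro power_increasing) auto
    moreover have "3 * 3 \<le> p * p" using p(2) by (intro mult_mono) auto
    ultimately show ?thesis by (simp add: power2_eq_square)
  qed
qed

text \<open>The corollary: W(1:n)_0 is the unique proper non-zero semi-modular subalgebra of W(1:n).\<close>
theorem corollary2p10:
  fixes p n :: nat
  assumes "infinite (UNIV :: 'a::field set)"
    and "perfect_field TYPE('a)"
    and "CHAR('a) = p" and "p > 2"
    and "n \<ge> 1" and "p ^ n \<noteq> 3"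
  shows "subalg (p ^ n) (zass0 (p ^ n) :: (nat \<Rightarrow> 'a) set)
     \<and> zass0 (p ^ n) \<noteq> {\<lambda>_. 0} \<and> zass0 (p ^ n) \<noteq> zass (p ^ n)
     \<and> semi_modular (p ^ n) (zass0 (p ^ n) :: (nat \<Rightarrow> 'a) set)
     \<and> (\<forall>U :: (nat \<Rightarrow> 'a) set. subalg (p ^ n) U \<and> U \<noteq> {\<lambda>_. 0} \<and> U \<noteq> zass (p ^ n)
          \<and> semi_modular (p ^ n) U \<longrightarrow> U = zass0 (p ^ n))"
proof -
  note N = char_power_facts[OF assms(3-6)]
  show ?thesis
  proof (intro conjI allI impI)
    show "subalg (p ^ n) (zass0 (p ^ n) :: (nat \<Rightarrow> 'a) set)" by (rule zass0_subalg)
    show "zass0 (p ^ n) \<noteq> {\<lambda>_. 0}" using N(2) by (intro zass0_nonzero) simp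
    show "zass0 (p ^ n) \<noteq> zass (p ^ n)" using N(2) by (intro zass0_proper) linarith
    show "semi_modular (p ^ n) (zass0 (p ^ n) :: (nat \<Rightarrow> 'a) set)" by (rule zass0_semi_modular)
    fix U :: "(nat \<Rightarrow> 'a) set"
    assume "subalg (p ^ n) U \<and> U \<noteq> {\<lambda>_. 0} \<and> U \<noteq> zass (p ^ n) \<and> semi_modular (p ^ n) U"
    then show "U = zass0 (p ^ n)" using semi_modular_unique[OF N] by blast
  qed
qed

end
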